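(* For each $\nu$, each $1\le i\le m$, each $1\le j<l\le N^\nu_i$ and all $\mathbf t,\mathbf u\ge\mathbf0$, $$0\le\mathrm{cov}(\chi^\nu_{i,j}(\mathbf t),\chi^\nu_{i,l}(\mathbf u))\le\sum_{k=1}^m(t_k\wedge u_k)\tilde N^\nu_k\lambda^\nu_{kii}$$ and $$\big|\mathrm{cov}(\chi^\nu_{i,j}(\mathbf t)-\chi^\nu_{i,j}(\mathbf u),\chi^\nu_{i,l}(\mathbf t)-\chi^\nu_{i,l}(\mathbf u))\big|\le 6\Big\{\sum_{k=1}^m\big([(t_k\vee u_k)\tilde N^\nu_k]-[(t_k\wedge u_k)\tilde N^\nu_k]\big)\mu^\nu_{ki}\Big\}\Big\{\sum_{k=1}^m(t_k\wedge u_k)\tilde N^\nu_k\lambda^\nu_{kii}\Big\}+2\sum_{k=1}^m\big([(t_k\vee u_k)\tilde N^\nu_k]-[(t_k\wedge u_k)\tilde N^\nu_k]\big)\lambda^\nu_{kii}.$$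
   Context: Fix $m\ge1$; $[x]$ is the integer part of $x$; sums/products over $1\le l\le x$ mean $1\le l\le[x]$. Fix $\nu$. Given integers $N^\nu_i\ge1$, $N^\nu=\sum_iN^\nu_i$, constants $\pi_i>0$, $\tilde N^\nu_k=N^\nu\pi_k$. Random vectors $\mathbf V^\nu_k=(V^\nu_{k,1},\dots,V^\nu_{k,m})\in[0,1]^m$; $\{\mathbf V^\nu_{(k,l)}:1\le k\le m,l\ge1\}$ independent with $\mathbf V^\nu_{(k,l)}\sim\mathbf V^\nu_k$ (infectivity vector of the $l$-th infective of type $k$). Individuals $(i,j)$, $1\le j\le N^\nu_i$. Conditionally on all infectivity vectors, the events "infective $(k,l)$ contacts individual $(i,j)$" are independent over all pairs with probabilities $V^\nu_{(k,l),i}$. For $\mathbf t=(t_1,\dots,t_m)\ge\mathbf0$, $\chi^\nu_{i,j}(\mathbf t)=1$ if $(i,j)$ is contacted by at least one infective $(k,l)$ with $1\le k\le m$, $1\le l\le t_k\tilde N^\nu_k$, and $0$ otherwise. $\mu^\nu_{ki}=\mathbb E[V^\nu_{k,i}]$, $\lambda^\nu_{kii}=\mathrm{var}(V^\nu_{k,i})$. $a\wedge b=\min$, $a\vee b=\max$. *)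

theory Defs
  imports "HOL-Probability.Probability"
begin

definition cov :: "'a measure \<Rightarrow> ('a \<Rightarrow> real) \<Rightarrow> ('a \<Rightarrow> real) \<Rightarrow> real" where
  "cov M X Y = (\<integral>\<omega>. (X \<omega> - (\<integral>x. X x \<partial>M)) * (Y \<omega> - (\<integral>x. Y x \<partial>M)) \<partial>M)"

text \<open>C k l i j w means that
  infective (k,l) contacts individual (i,j) in outcome w.\<close>
definition chi :: "nat \<Rightarrow> (nat \<Rightarrow> real) \<Rightarrow> (nat \<Rightarrow> nat \<Rightarrow> nat \<Rightarrow> nat \<Rightarrow> 'a \<Rightarrow> bool)
    \<Rightarrow> nat \<Rightarrow> nat \<Rightarrow> (nat \<Rightarrow> real) \<Rightarrow> 'a \<Rightarrow> real" where
  "chi m Nt C i j t \<omega> =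
     (if \<exists>k\<in>{1..m}. \<exists>l. 1 \<le> l \<and> int l \<le> \<lfloor>t k * Nt k\<rfloor> \<and> C k l i j \<omega> then 1 else 0)"

definition Vsigma :: "'a measure \<Rightarrow> nat \<Rightarrow> (nat \<Rightarrow> nat \<Rightarrow> nat \<Rightarrow> 'a \<Rightarrow> real) \<Rightarrow> 'a set set" where
  "Vsigma M m V = sigma_sets (space M)
     {V k l i -` B \<inter> space M | k l i B. k \<in> {1..m} \<and> 1 \<le> l \<and> i \<in> {1..m} \<and> B \<in> sets borel}"

end

theory Submission
  imports Defs
begin

(* Let X_j(Q) be the indicator that individual (i, j) escapes every infective in the finite set Q,
   so that chi = 1 - X_j(Q_t) for the set Q_t of infectives counted at time t.  Conditionally on the
   infectivities all contacts are independent, and the infectivity vectors are independent and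
   identically distributed within each type.  Hence E[X_j1(Q1) X_j2(Q2)] is a product over
   Q1 \<union> Q2 whose factor is a_k = E(1 - V_k,i) for an infective of type k lying in only one of the
   sets and s_k = E(1 - V_k,i)^2 for one lying in both, and both covariances become explicit
   polynomials in these moments.  Since a_k^2 <= s_k <= a_k <= 1, the elementary estimate
   0 <= prod x - prod y <= sum (x - y) for 0 <= y <= x <= 1 bounds them by sums of
   s_k - a_k^2 = lambda_kii over the infectives present at both times and of 1 - a_k = mu_ki over
   those present at only one of them.  Counting these infectives gives the theorem, the second
   bound even with both constants 6 and 2 replaced by 1. *)

lemma prod_diff_le_sum_diff:
  fixes x y :: "'b \<Rightarrow> real"
  assumes "\<And>p. p \<in> A \<Longrightarrow> 0 \<le> y p \<and> y p \<le> x p \<and> x p \<le> 1"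
  shows "0 \<le> prod x A - prod y A" and "prod x A - prod y A \<le> (\<Sum>p\<in>A. x p - y p)"
proof -
  show "0 \<le> prod x A - prod y A"
    using assms by (simp add: prod_mono)
  have "prod x A - prod y A \<le> \<bar>prod x A - prod y A\<bar>"
    by simp
  also have "\<dots> \<le> (\<Sum>p\<in>A. \<bar>x p - y p\<bar>)"
    using norm_prod_diff[of A x y] assms by force
  also have "\<dots> = (\<Sum>p\<in>A. x p - y p)"
    using assms by (intro sum.cong) auto
  finally show "prod x A - prod y A \<le> (\<Sum>p\<in>A. x p - y p)" .
qed

definition unit_moments :: "real \<Rightarrow> real \<Rightarrow> bool" where
  "unit_moments a s \<longleftrightarrow> 0 \<le> a \<and> a \<le> 1 \<and> a\<^sup>2 \<le> s \<and> s \<le> a"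

lemma prod_unit_moments:
  fixes a s :: "'b \<Rightarrow> real"
  assumes "\<And>p. p \<in> Z \<Longrightarrow> unit_moments (a p) (s p)"
  shows "unit_moments (\<Prod>p\<in>Z. a p) (\<Prod>p\<in>Z. s p)"
    and "(\<Prod>p\<in>Z. s p) - (\<Prod>p\<in>Z. a p)\<^sup>2 \<le> (\<Sum>p\<in>Z. s p - (a p)\<^sup>2)"
    and "1 - (\<Prod>p\<in>Z. a p) \<le> (\<Sum>p\<in>Z. 1 - a p)"
proof -
  have a: "0 \<le> a p \<and> a p \<le> 1 \<and> s p \<le> a p" and s: "0 \<le> (a p)\<^sup>2 \<and> (a p)\<^sup>2 \<le> s p \<and> s p \<le> 1"
    if "p \<in> Z" for p
    using assms[OF that] unfolding unit_moments_def by auto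
  have sq: "(\<Prod>p\<in>Z. a p)\<^sup>2 = (\<Prod>p\<in>Z. (a p)\<^sup>2)"
    by (simp add: prod_power_distrib)
  note diff = prod_diff_le_sum_diff[where x = s and y = "\<lambda>p. (a p)\<^sup>2", OF s]
  have "0 \<le> (\<Prod>p\<in>Z. a p)" "(\<Prod>p\<in>Z. a p) \<le> 1" "(\<Prod>p\<in>Z. s p) \<le> (\<Prod>p\<in>Z. a p)"
    using a s by (auto intro: prod_nonneg prod_le_1 prod_mono order_trans[OF zero_le_power2])
  then show "unit_moments (\<Prod>p\<in>Z. a p) (\<Prod>p\<in>Z. s p)"
    using diff(1) unfolding unit_moments_def sq by simp
  show "(\<Prod>p\<in>Z. s p) - (\<Prod>p\<in>Z. a p)\<^sup>2 \<le> (\<Sum>p\<in>Z. s p - (a p)\<^sup>2)"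
    using diff(2) unfolding sq .
  show "1 - (\<Prod>p\<in>Z. a p) \<le> (\<Sum>p\<in>Z. 1 - a p)"
    using prod_diff_le_sum_diff(2)[where x = "\<lambda>_. 1" and y = a] a by simp
qed

text \<open>With \<open>a p\<close> and \<open>s p\<close> the first and second moments of \<open>1 - V\<^sub>p\<close>, this is the probability
  that one individual escapes the infectives in \<open>Q1\<close> and another one those in \<open>Q2\<close>.\<close>
definition joint_escape :: "('b \<Rightarrow> real) \<Rightarrow> ('b \<Rightarrow> real) \<Rightarrow> 'b set \<Rightarrow> 'b set \<Rightarrow> real" where
  "joint_escape a s Q1 Q2 = (\<Prod>p\<in>Q1 \<union> Q2. if p \<in> Q1 \<inter> Q2 then s p else a p)"

lemma joint_escape_same [simp]: "joint_escape a s T T = (\<Prod>p\<in>T. s p)"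
  by (simp add: joint_escape_def)

lemma joint_escape_empty [simp]: "joint_escape a s T {} = (\<Prod>p\<in>T. a p)"
  by (simp add: joint_escape_def)

lemma joint_escape_commute: "joint_escape a s T U = joint_escape a s U T"
  by (simp add: joint_escape_def Un_commute Int_commute)

lemma joint_escape_split:
  assumes "finite T" "finite U"
  shows "joint_escape a s T U = (\<Prod>p\<in>T \<inter> U. s p) * (\<Prod>p\<in>T - U. a p) * (\<Prod>p\<in>U - T. a p)"
proof -
  let ?f = "\<lambda>p. if p \<in> T \<inter> U then s p else a p"
  have "joint_escape a s T U = prod ?f ((T \<inter> U) \<union> (T - U) \<union> (U - T))"
    unfolding joint_escape_def by (rule arg_cong[where f = "prod ?f"]) blast
  also have "\<dots> = prod ?f ((T \<inter> U) \<union> (T - U)) * prod ?f (U - T)"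
    by (rule prod.union_disjoint) (use assms in auto)
  also have "prod ?f ((T \<inter> U) \<union> (T - U)) = prod ?f (T \<inter> U) * prod ?f (T - U)"
    by (rule prod.union_disjoint) (use assms in auto)
  also have "prod ?f (T \<inter> U) = (\<Prod>p\<in>T \<inter> U. s p)"
    by (rule prod.cong) auto
  also have "prod ?f (T - U) = (\<Prod>p\<in>T - U. a p)"
    by (rule prod.cong) auto
  also have "prod ?f (U - T) = (\<Prod>p\<in>U - T. a p)"
    by (rule prod.cong) auto
  finally show ?thesis .
qed

lemma joint_escape_cov_bounds:
  assumes fin: "finite T" "finite U" and moments: "\<And>p. p \<in> T \<union> U \<Longrightarrow> unit_moments (a p) (s p)"
  shows "0 \<le> joint_escape a s T U - joint_escape a s T {} * joint_escape a s U {}"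
    and "joint_escape a s T U - joint_escape a s T {} * joint_escape a s U {}
      \<le> (\<Sum>p\<in>T \<inter> U. s p - (a p)\<^sup>2)"
proof -
  from moments have "\<And>p. p \<in> T \<inter> U \<Longrightarrow> unit_moments (a p) (s p)"
    "\<And>p. p \<in> T - U \<Longrightarrow> unit_moments (a p) (s p)" "\<And>p. p \<in> U - T \<Longrightarrow> unit_moments (a p) (s p)"
    by blast+
  note I = prod_unit_moments[of "T \<inter> U" a s, OF this(1)]
    and Y = prod_unit_moments[of "T - U" a s, OF this(2)]
    and X = prod_unit_moments[of "U - T" a s, OF this(3)]
  let ?d = "(\<Prod>p\<in>T \<inter> U. s p) - (\<Prod>p\<in>T \<inter> U. a p)\<^sup>2"
  let ?c = "(\<Prod>p\<in>T - U. a p) * (\<Prod>p\<in>U - T. a p)"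
  have "joint_escape a s T U - joint_escape a s T {} * joint_escape a s U {} = ?d * ?c"
    using prod.Int_Diff[OF fin(1), of a U] prod.Int_Diff[OF fin(2), of a T]
    by (simp add: joint_escape_split fin Int_commute power2_eq_square algebra_simps)
  moreover have "0 \<le> ?c" "?c \<le> 1" "0 \<le> ?d"
    using X(1) Y(1) I(1) unfolding unit_moments_def by (auto intro: mult_le_one)
  ultimately show "0 \<le> joint_escape a s T U - joint_escape a s T {} * joint_escape a s U {}"
    and "joint_escape a s T U - joint_escape a s T {} * joint_escape a s U {}
      \<le> (\<Sum>p\<in>T \<inter> U. s p - (a p)\<^sup>2)"
    using I(2) mult_left_le[of ?c ?d] by auto
qed

lemma sq_diff_le_one_minus_add:
  fixes x y :: real
  assumes "0 \<le> x" "x \<le> 1" "0 \<le> y" "y \<le> 1"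
  shows "(x - y)\<^sup>2 \<le> (1 - x) + (1 - y)"
proof -
  have "(x - y)\<^sup>2 = \<bar>x - y\<bar> * \<bar>x - y\<bar>"
    by (simp add: power2_eq_square)
  also have "\<dots> \<le> \<bar>x - y\<bar> * 1"
    by (rule mult_left_mono) (use assms in auto)
  finally have "(x - y)\<^sup>2 \<le> \<bar>x - y\<bar>"
    by simp
  then show ?thesis
    using assms by linarith
qed

lemma joint_escape_increment_cov_bounds:
  assumes fin: "finite T" "finite U" and moments: "\<And>p. p \<in> T \<union> U \<Longrightarrow> unit_moments (a p) (s p)"
  defines "D \<equiv> joint_escape a s U U - 2 * joint_escape a s T U + joint_escape a s T T
      - (joint_escape a s U {} - joint_escape a s T {})\<^sup>2"
  shows "0 \<le> D"
    and "D \<le> (\<Sum>p\<in>sym_diff T U. 1 - a p) * (\<Sum>p\<in>T \<inter> U. s p - (a p)\<^sup>2)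
            + (\<Sum>p\<in>sym_diff T U. s p - (a p)\<^sup>2)"
proof -
  from moments have "\<And>p. p \<in> T \<inter> U \<Longrightarrow> unit_moments (a p) (s p)"
    "\<And>p. p \<in> T - U \<Longrightarrow> unit_moments (a p) (s p)" "\<And>p. p \<in> U - T \<Longrightarrow> unit_moments (a p) (s p)"
    by blast+
  note I = prod_unit_moments[of "T \<inter> U" a s, OF this(1)]
    and Y = prod_unit_moments[of "T - U" a s, OF this(2)]
    and X = prod_unit_moments[of "U - T" a s, OF this(3)]
  define sI aI where "sI = (\<Prod>p\<in>T \<inter> U. s p)" and "aI = (\<Prod>p\<in>T \<inter> U. a p)"
  define sX aX where "sX = (\<Prod>p\<in>U - T. s p)" and "aX = (\<Prod>p\<in>U - T. a p)"
  define sY aY where "sY = (\<Prod>p\<in>T - U. s p)" and "aY = (\<Prod>p\<in>T - U. a p)"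
  have I': "0 \<le> sI - aI\<^sup>2" "0 \<le> sI" "sI \<le> 1" and X': "0 \<le> sX - aX\<^sup>2" "0 \<le> aX" "aX \<le> 1"
    and Y': "0 \<le> sY - aY\<^sup>2" "0 \<le> aY" "aY \<le> 1"
    using I(1) X(1) Y(1) unfolding sI_def aI_def sX_def aX_def sY_def aY_def unit_moments_def
    by (auto intro: order_trans[OF zero_le_power2])
  have "joint_escape a s U U = sI * sX" "joint_escape a s T T = sI * sY"
    "joint_escape a s T U = sI * aY * aX" "joint_escape a s U {} = aI * aX" "joint_escape a s T {} = aI * aY"
    using prod.Int_Diff[OF fin(1), of a U] prod.Int_Diff[OF fin(2), of a T]
      prod.Int_Diff[OF fin(1), of s U] prod.Int_Diff[OF fin(2), of s T]
    unfolding sI_def aI_def sX_def aX_def sY_def aY_def by (simp_all add: joint_escape_split fin Int_commute)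
  then have "D = sI * ((sX - aX\<^sup>2) + (sY - aY\<^sup>2)) + (sI - aI\<^sup>2) * (aX - aY)\<^sup>2"
    unfolding D_def by (simp add: power2_eq_square algebra_simps)
  moreover have "sI * ((sX - aX\<^sup>2) + (sY - aY\<^sup>2)) \<le> (sX - aX\<^sup>2) + (sY - aY\<^sup>2)"
    using I' X' Y' by (intro mult_left_le_one_le) auto
  moreover have "(sI - aI\<^sup>2) * (aX - aY)\<^sup>2
      \<le> (\<Sum>p\<in>T \<inter> U. s p - (a p)\<^sup>2) * ((\<Sum>p\<in>U - T. 1 - a p) + (\<Sum>p\<in>T - U. 1 - a p))"
  proof (rule mult_mono)
    have "(aX - aY)\<^sup>2 \<le> (1 - aX) + (1 - aY)"
      using X' Y' by (intro sq_diff_le_one_minus_add)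
    then show "(aX - aY)\<^sup>2 \<le> (\<Sum>p\<in>U - T. 1 - a p) + (\<Sum>p\<in>T - U. 1 - a p)"
      using X(3) Y(3) unfolding aX_def aY_def by linarith
  qed (use I(2) I' in \<open>simp_all add: sI_def aI_def\<close>)
  moreover have "(\<Sum>p\<in>sym_diff T U. f p) = (\<Sum>p\<in>U - T. f p) + (\<Sum>p\<in>T - U. f p)"
    for f :: "'a \<Rightarrow> real"
    using fin by (subst sum.union_disjoint) auto
  ultimately show "0 \<le> D"
    and "D \<le> (\<Sum>p\<in>sym_diff T U. 1 - a p) * (\<Sum>p\<in>T \<inter> U. s p - (a p)\<^sup>2)
            + (\<Sum>p\<in>sym_diff T U. s p - (a p)\<^sup>2)"
    using I' X' Y' X(2) Y(2) unfolding sX_def aX_def sY_def aY_def by (simp_all add: mult.commute)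
qed

lemma (in prob_space) cov_eq:
  fixes X Y :: "'a \<Rightarrow> real"
  assumes "integrable M X" "integrable M Y" "integrable M (\<lambda>\<omega>. X \<omega> * Y \<omega>)"
  shows "cov M X Y = expectation (\<lambda>\<omega>. X \<omega> * Y \<omega>) - expectation X * expectation Y"
proof -
  have "cov M X Y = expectation (\<lambda>\<omega>. X \<omega> * Y \<omega> - expectation Y * X \<omega> - expectation X * Y \<omega>
      + expectation X * expectation Y)"
    unfolding cov_def by (rule Bochner_Integration.integral_cong) (auto simp: algebra_simps)
  also have "\<dots> = expectation (\<lambda>\<omega>. X \<omega> * Y \<omega>) - expectation X * expectation Y"
    using assms by (simp add: prob_space)
  finally show ?thesis .
qed

lemma (in prob_space) cov_one_minus:
  fixes X Y :: "'a \<Rightarrow> real"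
  assumes "integrable M X" "integrable M Y"
  shows "cov M (\<lambda>\<omega>. 1 - X \<omega>) (\<lambda>\<omega>. 1 - Y \<omega>) = cov M X Y"
  unfolding cov_def using assms by (simp add: prob_space algebra_simps)

lemma (in prob_space) cov_diff_diff:
  fixes X1 X2 Y1 Y2 :: "'a \<Rightarrow> real"
  assumes "integrable M X1" "integrable M X2" "integrable M Y1" "integrable M Y2"
    and "integrable M (\<lambda>\<omega>. X1 \<omega> * Y1 \<omega>)" "integrable M (\<lambda>\<omega>. X1 \<omega> * Y2 \<omega>)"
    and "integrable M (\<lambda>\<omega>. X2 \<omega> * Y1 \<omega>)" "integrable M (\<lambda>\<omega>. X2 \<omega> * Y2 \<omega>)"
  shows "cov M (\<lambda>\<omega>. X1 \<omega> - X2 \<omega>) (\<lambda>\<omega>. Y1 \<omega> - Y2 \<omega>)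
    = cov M X1 Y1 - cov M X1 Y2 - cov M X2 Y1 + cov M X2 Y2"
proof -
  have "(\<lambda>\<omega>. (X1 \<omega> - X2 \<omega>) * (Y1 \<omega> - Y2 \<omega>))
      = (\<lambda>\<omega>. (X1 \<omega> * Y1 \<omega> - X1 \<omega> * Y2 \<omega>) - (X2 \<omega> * Y1 \<omega> - X2 \<omega> * Y2 \<omega>))"
    by (simp add: algebra_simps)
  then show ?thesis
    using assms by (simp add: cov_eq algebra_simps)
qed

lemma (in prob_space) unit_moments_expectation:
  fixes Y :: "'a \<Rightarrow> real"
  assumes [measurable]: "Y \<in> borel_measurable M" and range: "\<And>\<omega>. \<omega> \<in> space M \<Longrightarrow> 0 \<le> Y \<omega> \<and> Y \<omega> \<le> 1"
  shows "unit_moments (expectation Y) (expectation (\<lambda>\<omega>. (Y \<omega>)\<^sup>2))"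
proof -
  have int: "integrable M Y" "integrable M (\<lambda>\<omega>. (Y \<omega>)\<^sup>2)"
    using range by (auto intro!: integrable_const_bound[where B = 1] simp: abs_square_le_1)
  have "0 \<le> variance Y"
    by (rule integral_nonneg_AE) auto
  then have "(expectation Y)\<^sup>2 \<le> expectation (\<lambda>\<omega>. (Y \<omega>)\<^sup>2)"
    using variance_eq[OF int] by simp
  moreover have "expectation Y \<le> expectation (\<lambda>_. 1)"
    using int range by (intro integral_mono) auto
  moreover have "expectation (\<lambda>\<omega>. (Y \<omega>)\<^sup>2) \<le> expectation Y"
    using int range by (intro integral_mono) (auto simp: power2_eq_square mult_left_le_one_le)
  moreover have "0 \<le> expectation Y"
    using range by (auto intro: integral_nonneg_AE)
  ultimately show ?thesis
    by (simp add: unit_moments_def prob_space)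
qed

lemma integral_comp_eq_if_distr_eq:
  fixes g :: "'b \<Rightarrow> real"
  assumes "X \<in> M \<rightarrow>\<^sub>M N" "Y \<in> M \<rightarrow>\<^sub>M N" "distr M N X = distr M N Y" "g \<in> borel_measurable N"
  shows "(\<integral>\<omega>. g (X \<omega>) \<partial>M) = (\<integral>\<omega>. g (Y \<omega>) \<partial>M)"
  using integral_distr[OF assms(1,4)] integral_distr[OF assms(2,4)] assms(3) by simp

definition infectives :: "nat \<Rightarrow> (nat \<Rightarrow> real) \<Rightarrow> (nat \<Rightarrow> real) \<Rightarrow> (nat \<times> nat) set" where
  "infectives m Nt t = (SIGMA k:{1..m}. {1..nat \<lfloor>t k * Nt k\<rfloor>})"

definition escape :: "(nat \<Rightarrow> nat \<Rightarrow> nat \<Rightarrow> nat \<Rightarrow> 'a \<Rightarrow> bool) \<Rightarrow> nat \<Rightarrow> nat \<Rightarrow> (nat \<times> nat) set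
    \<Rightarrow> 'a \<Rightarrow> real" where
  "escape C i j Q = indicator {\<omega>. \<forall>(k, l)\<in>Q. \<not> C k l i j \<omega>}"

lemma finite_infectives [simp]: "finite (infectives m Nt t)"
  by (simp add: infectives_def)

lemma infectives_subset: "infectives m Nt t \<subseteq> {1..m} \<times> {1..}"
  by (auto simp: infectives_def)

lemma chi_eq_one_minus_escape: "chi m Nt C i j t = (\<lambda>\<omega>. 1 - escape C i j (infectives m Nt t) \<omega>)"
proof
  fix \<omega>
  have key: "(\<exists>l. 1 \<le> l \<and> int l \<le> z \<and> P l) \<longleftrightarrow> (\<exists>l\<in>{1..nat z}. P l)" for z :: int and P
    by (auto simp: le_nat_iff) (use le_nat_iff in force)
  have "(\<exists>k\<in>{1..m}. \<exists>l. 1 \<le> l \<and> int l \<le> \<lfloor>t k * Nt k\<rfloor> \<and> C k l i j \<omega>)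
      \<longleftrightarrow> (\<exists>(k, l)\<in>infectives m Nt t. C k l i j \<omega>)"
    unfolding infectives_def by (simp only: key) auto
  then show "chi m Nt C i j t \<omega> = 1 - escape C i j (infectives m Nt t) \<omega>"
    by (auto simp: chi_def escape_def indicator_def)
qed

lemma nat_floor_scaled_min_max:
  fixes x y c :: real
  assumes "0 \<le> c"
  shows "min (nat \<lfloor>x * c\<rfloor>) (nat \<lfloor>y * c\<rfloor>) = nat \<lfloor>min x y * c\<rfloor>"
    and "max (nat \<lfloor>x * c\<rfloor>) (nat \<lfloor>y * c\<rfloor>) = nat \<lfloor>max x y * c\<rfloor>"
proof -
  have mono: "nat \<lfloor>x' * c\<rfloor> \<le> nat \<lfloor>y' * c\<rfloor>" if "x' \<le> y'" for x' y'
    using that assms by (intro nat_mono floor_mono mult_right_mono)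
  show "min (nat \<lfloor>x * c\<rfloor>) (nat \<lfloor>y * c\<rfloor>) = nat \<lfloor>min x y * c\<rfloor>"
    and "max (nat \<lfloor>x * c\<rfloor>) (nat \<lfloor>y * c\<rfloor>) = nat \<lfloor>max x y * c\<rfloor>"
    using mono[of x y] mono[of y x] by (auto simp: min_def max_def)
qed

lemma sum_Sigma_fst:
  fixes g :: "'a \<Rightarrow> real"
  assumes "finite A" "\<forall>k\<in>A. finite (B k)"
  shows "(\<Sum>p\<in>Sigma A B. g (fst p)) = (\<Sum>k\<in>A. real (card (B k)) * g k)"
proof -
  have "(\<Sum>p\<in>Sigma A B. g (fst p)) = (\<Sum>(k, l)\<in>Sigma A B. g k)"
    by (simp add: case_prod_beta)
  also have "\<dots> = (\<Sum>k\<in>A. \<Sum>l\<in>B k. g k)"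
    using assms by (rule sum.Sigma[symmetric])
  finally show ?thesis
    by simp
qed

lemma sum_infectives_Int_le:
  assumes "\<forall>k\<in>{1..m}. 0 \<le> t k \<and> 0 \<le> u k \<and> 0 \<le> Nt k" "\<forall>k\<in>{1..m}. 0 \<le> g k"
  shows "(\<Sum>p\<in>infectives m Nt t \<inter> infectives m Nt u. g (fst p))
    \<le> (\<Sum>k\<in>{1..m}. min (t k) (u k) * Nt k * g k)"
proof -
  have "infectives m Nt t \<inter> infectives m Nt u
      = (SIGMA k:{1..m}. {1..min (nat \<lfloor>t k * Nt k\<rfloor>) (nat \<lfloor>u k * Nt k\<rfloor>)})"
    unfolding infectives_def by auto
  also have "\<dots> = (SIGMA k:{1..m}. {1..nat \<lfloor>min (t k) (u k) * Nt k\<rfloor>})"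
    using assms by (intro Sigma_cong refl) (simp add: nat_floor_scaled_min_max)
  finally have "(\<Sum>p\<in>infectives m Nt t \<inter> infectives m Nt u. g (fst p))
      = (\<Sum>k\<in>{1..m}. real (nat \<lfloor>min (t k) (u k) * Nt k\<rfloor>) * g k)"
    by (simp add: sum_Sigma_fst)
  also have "\<dots> \<le> (\<Sum>k\<in>{1..m}. min (t k) (u k) * Nt k * g k)"
    using assms by (intro sum_mono mult_right_mono) auto
  finally show ?thesis .
qed

lemma sum_infectives_sym_diff:
  assumes "\<forall>k\<in>{1..m}. 0 \<le> t k \<and> 0 \<le> u k \<and> 0 \<le> Nt k"
  shows "(\<Sum>p\<in>sym_diff (infectives m Nt t) (infectives m Nt u). g (fst p))
    = (\<Sum>k\<in>{1..m}. (real_of_int \<lfloor>max (t k) (u k) * Nt k\<rfloor> - real_of_int \<lfloor>min (t k) (u k) * Nt k\<rfloor>) * g k)"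
proof -
  have "sym_diff (infectives m Nt t) (infectives m Nt u)
      = (SIGMA k:{1..m}. {min (nat \<lfloor>t k * Nt k\<rfloor>) (nat \<lfloor>u k * Nt k\<rfloor>)<..max (nat \<lfloor>t k * Nt k\<rfloor>) (nat \<lfloor>u k * Nt k\<rfloor>)})"
    unfolding infectives_def by auto
  also have "\<dots> = (SIGMA k:{1..m}. {nat \<lfloor>min (t k) (u k) * Nt k\<rfloor><..nat \<lfloor>max (t k) (u k) * Nt k\<rfloor>})"
    using assms by (intro Sigma_cong refl) (simp add: nat_floor_scaled_min_max)
  finally have "(\<Sum>p\<in>sym_diff (infectives m Nt t) (infectives m Nt u). g (fst p))
      = (\<Sum>k\<in>{1..m}. real (nat \<lfloor>max (t k) (u k) * Nt k\<rfloor> - nat \<lfloor>min (t k) (u k) * Nt k\<rfloor>) * g k)"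
    by (simp add: sum_Sigma_fst)
  also have "\<dots> = (\<Sum>k\<in>{1..m}.
      (real_of_int \<lfloor>max (t k) (u k) * Nt k\<rfloor> - real_of_int \<lfloor>min (t k) (u k) * Nt k\<rfloor>) * g k)"
  proof (intro sum.cong refl arg_cong2[where f = "(*)"])
    have nat_diff: "real (nat a - nat b) = real_of_int a - real_of_int b" if "0 \<le> b" "b \<le> a" for a b :: int
      using that by (simp add: of_nat_diff)
    fix k assume "k \<in> {1..m}"
    then show "real (nat \<lfloor>max (t k) (u k) * Nt k\<rfloor> - nat \<lfloor>min (t k) (u k) * Nt k\<rfloor>)
        = real_of_int \<lfloor>max (t k) (u k) * Nt k\<rfloor> - real_of_int \<lfloor>min (t k) (u k) * Nt k\<rfloor>"
      using assms by (intro nat_diff floor_mono mult_right_mono) auto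
  qed
  finally show ?thesis .
qed

locale contact_model = prob_space M
  for M :: "'a measure" and m :: nat and N :: "nat \<Rightarrow> nat"
    and V :: "nat \<Rightarrow> nat \<Rightarrow> nat \<Rightarrow> 'a \<Rightarrow> real" and C :: "nat \<Rightarrow> nat \<Rightarrow> nat \<Rightarrow> nat \<Rightarrow> 'a \<Rightarrow> bool" +
  assumes V_meas: "\<forall>k l i. V k l i \<in> borel_measurable M"
    and V_range: "\<forall>k\<in>{1..m}. \<forall>l\<ge>1. \<forall>i\<in>{1..m}. \<forall>\<omega>\<in>space M. 0 \<le> V k l i \<omega> \<and> V k l i \<omega> \<le> 1"
    and V_indep: "indep_vars (\<lambda>_. PiM {1..m} (\<lambda>_. (borel :: real measure)))
                    (\<lambda>(k, l) \<omega>. restrict (\<lambda>i. V k l i \<omega>) {1..m}) ({1..m} \<times> {1..})"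
    and V_ident: "\<forall>k\<in>{1..m}. \<forall>l\<ge>1.
                    distr M (PiM {1..m} (\<lambda>_. (borel :: real measure))) (\<lambda>\<omega>. restrict (\<lambda>i. V k l i \<omega>) {1..m})
                  = distr M (PiM {1..m} (\<lambda>_. (borel :: real measure))) (\<lambda>\<omega>. restrict (\<lambda>i. V k 1 i \<omega>) {1..m})"
    and C_meas: "\<forall>k l i j. {\<omega> \<in> space M. C k l i j \<omega>} \<in> sets M"
    and C_cond: "\<forall>A\<in>Vsigma M m V. \<forall>P b. finite P \<and>
                   P \<subseteq> {(k, l, i, j). k \<in> {1..m} \<and> 1 \<le> l \<and> i \<in> {1..m} \<and> j \<in> {1..N i}} \<longrightarrow>
                   measure M (A \<inter> {\<omega> \<in> space M. \<forall>(k, l, i, j)\<in>P. C k l i j \<omega> = b (k, l, i, j)})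
                 = (\<integral>\<omega>. indicator A \<omega> *
                      (\<Prod>(k, l, i, j)\<in>P. if b (k, l, i, j) then V k l i \<omega> else 1 - V k l i \<omega>) \<partial>M)"
begin

definition miss_prob :: "nat \<Rightarrow> nat \<Rightarrow> real" where
  "miss_prob k i = expectation (\<lambda>\<omega>. 1 - V k 1 i \<omega>)"

definition miss_both_prob :: "nat \<Rightarrow> nat \<Rightarrow> real" where
  "miss_both_prob k i = expectation (\<lambda>\<omega>. (1 - V k 1 i \<omega>)\<^sup>2)"

abbreviation joint_escape_prob :: "nat \<Rightarrow> (nat \<times> nat) set \<Rightarrow> (nat \<times> nat) set \<Rightarrow> real" where
  "joint_escape_prob i \<equiv> joint_escape (\<lambda>p. miss_prob (fst p) i) (\<lambda>p. miss_both_prob (fst p) i)"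

lemma V_measurable [measurable]: "V k l i \<in> borel_measurable M"
  using V_meas by blast

lemma C_pred [measurable]: "Measurable.pred M (C k l i j)"
  using C_meas by (simp add: pred_def)

lemma unit_moments_miss_prob:
  assumes "k \<in> {1..m}" "i \<in> {1..m}"
  shows "unit_moments (miss_prob k i) (miss_both_prob k i)"
  unfolding miss_prob_def miss_both_prob_def
  using assms V_range by (intro unit_moments_expectation) auto

lemma integrable_V:
  assumes "k \<in> {1..m}" "1 \<le> l" "i \<in> {1..m}"
  shows "integrable M (V k l i)"
  using assms V_meas V_range by (intro integrable_const_bound[where B = 1]) auto

lemma expectation_V_eq:
  assumes "k \<in> {1..m}" "i \<in> {1..m}"
  shows "expectation (V k 1 i) = 1 - miss_prob k i"
  using integrable_V[OF assms(1) _ assms(2)] by (simp add: miss_prob_def prob_space)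

lemma variance_V_eq:
  assumes "k \<in> {1..m}" "i \<in> {1..m}"
  shows "variance (V k 1 i) = miss_both_prob k i - (miss_prob k i)\<^sup>2"
proof -
  have int: "integrable M (\<lambda>\<omega>. 1 - V k 1 i \<omega>)" "integrable M (\<lambda>\<omega>. (1 - V k 1 i \<omega>)\<^sup>2)"
    using assms V_meas V_range
    by (auto intro!: integrable_const_bound[where B = 1] simp: abs_square_le_1)
  have "expectation (\<lambda>\<omega>. 1 - V k 1 i \<omega>) = 1 - expectation (V k 1 i)"
    using expectation_V_eq[OF assms] by (simp add: miss_prob_def)
  moreover have "(v - e)\<^sup>2 = (1 - v - (1 - e))\<^sup>2" for v e :: real
    by (simp add: power2_eq_square algebra_simps)
  ultimately have "variance (V k 1 i) = variance (\<lambda>\<omega>. 1 - V k 1 i \<omega>)"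
    by (auto intro: Bochner_Integration.integral_cong)
  also have "\<dots> = miss_both_prob k i - (miss_prob k i)\<^sup>2"
    unfolding miss_prob_def miss_both_prob_def by (rule variance_eq[OF int])
  finally show ?thesis .
qed

lemma escape_measurable [measurable]:
  assumes "finite Q"
  shows "escape C i j Q \<in> borel_measurable M"
  unfolding escape_def indicator_def mem_Collect_eq using assms by measurable

lemma integrable_escape_mult:
  assumes "finite Q1" "finite Q2"
  shows "integrable M (\<lambda>\<omega>. escape C i j1 Q1 \<omega> * escape C i j2 Q2 \<omega>)"
proof (rule integrable_const_bound[where B = 1])
  show "AE \<omega> in M. norm (escape C i j1 Q1 \<omega> * escape C i j2 Q2 \<omega>) \<le> 1"
    by (simp add: escape_def indicator_def)
qed (use assms in measurable)

lemma integrable_escape: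
  assumes "finite Q"
  shows "integrable M (escape C i j Q)"
proof (rule integrable_const_bound[where B = 1])
  show "AE \<omega> in M. norm (escape C i j Q \<omega>) \<le> 1"
    by (simp add: escape_def indicator_def)
qed (use assms in measurable)

lemma integral_prod_V:
  fixes f :: "nat \<times> nat \<Rightarrow> real \<Rightarrow> real"
  assumes Q: "finite Q" "Q \<subseteq> {1..m} \<times> {1..}" and i: "i \<in> {1..m}"
    and f: "\<And>p. p \<in> Q \<Longrightarrow> f p \<in> borel_measurable borel"
    and bound: "\<And>p v. p \<in> Q \<Longrightarrow> 0 \<le> v \<Longrightarrow> v \<le> 1 \<Longrightarrow> \<bar>f p v\<bar> \<le> B"
  shows "(\<integral>\<omega>. (\<Prod>p\<in>Q. f p (V (fst p) (snd p) i \<omega>)) \<partial>M) = (\<Prod>p\<in>Q. \<integral>\<omega>. f p (V (fst p) 1 i \<omega>) \<partial>M)"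
proof -
  let ?R = "\<lambda>k l \<omega>. restrict (\<lambda>i. V k l i \<omega>) {1..m}"
  have R: "?R k l \<in> M \<rightarrow>\<^sub>M PiM {1..m} (\<lambda>_. borel)" for k l
    using V_meas by (intro measurable_restrict) auto
  have component: "(\<lambda>y. f p (y i)) \<in> borel_measurable (PiM {1..m} (\<lambda>_. borel))" if "p \<in> Q" for p
    using measurable_component_singleton[OF i] f[OF that] by (rule measurable_compose)
  have "indep_vars (\<lambda>_. borel) (\<lambda>p \<omega>. (\<lambda>y. f p (y i)) ((\<lambda>(k, l). ?R k l) p \<omega>)) Q"
    using indep_vars_subset[OF V_indep Q(2)] component by (rule indep_vars_compose2)
  then have "indep_vars (\<lambda>_. borel) (\<lambda>p \<omega>. f p (V (fst p) (snd p) i \<omega>)) Q"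
    using i by (simp add: case_prod_beta)
  then have "(\<integral>\<omega>. (\<Prod>p\<in>Q. f p (V (fst p) (snd p) i \<omega>)) \<partial>M)
      = (\<Prod>p\<in>Q. \<integral>\<omega>. f p (V (fst p) (snd p) i \<omega>) \<partial>M)"
  proof (rule indep_vars_lebesgue_integral[OF Q(1)])
    fix p assume p: "p \<in> Q"
    then have "fst p \<in> {1..m}" "1 \<le> snd p"
      using Q(2) by auto
    then show "integrable M (\<lambda>\<omega>. f p (V (fst p) (snd p) i \<omega>))"
      using V_meas V_range i f[OF p] bound[OF p]
      by (intro integrable_const_bound[where B = B]) (auto intro: measurable_compose)
  qed
  also have "\<dots> = (\<Prod>p\<in>Q. \<integral>\<omega>. f p (V (fst p) 1 i \<omega>) \<partial>M)"
  proof (rule prod.cong[OF refl])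
    fix p assume p: "p \<in> Q"
    then have k: "fst p \<in> {1..m}" and l: "1 \<le> snd p"
      using Q(2) by auto
    have "(\<integral>\<omega>. f p (?R (fst p) (snd p) \<omega> i) \<partial>M) = (\<integral>\<omega>. f p (?R (fst p) 1 \<omega> i) \<partial>M)"
      by (rule integral_comp_eq_if_distr_eq[OF R R V_ident[rule_format, OF k l] component[OF p]])
    then show "(\<integral>\<omega>. f p (V (fst p) (snd p) i \<omega>) \<partial>M) = (\<integral>\<omega>. f p (V (fst p) 1 i \<omega>) \<partial>M)"
      using i by simp
  qed
  finally show ?thesis .
qed

lemma integral_prod_miss:
  assumes Q: "finite Q1" "finite Q2" "Q1 \<subseteq> {1..m} \<times> {1..}" "Q2 \<subseteq> {1..m} \<times> {1..}"
    and i: "i \<in> {1..m}"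
  shows "(\<integral>\<omega>. (\<Prod>p\<in>Q1. 1 - V (fst p) (snd p) i \<omega>) * (\<Prod>p\<in>Q2. 1 - V (fst p) (snd p) i \<omega>) \<partial>M)
    = joint_escape_prob i Q1 Q2"
proof -
  define f where "f p v = (if p \<in> Q1 then 1 - v else 1) * (if p \<in> Q2 then 1 - v else (1::real))" for p v
  have "(\<Prod>p\<in>Q1. 1 - V (fst p) (snd p) i \<omega>) * (\<Prod>p\<in>Q2. 1 - V (fst p) (snd p) i \<omega>)
      = (\<Prod>p\<in>Q1 \<union> Q2. f p (V (fst p) (snd p) i \<omega>))" for \<omega>
    using Q unfolding f_def
    by (simp add: prod.distrib prod.inter_restrict[symmetric] Int_absorb1 Int_absorb2)
  then have "(\<integral>\<omega>. (\<Prod>p\<in>Q1. 1 - V (fst p) (snd p) i \<omega>) * (\<Prod>p\<in>Q2. 1 - V (fst p) (snd p) i \<omega>) \<partial>M)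
      = (\<integral>\<omega>. (\<Prod>p\<in>Q1 \<union> Q2. f p (V (fst p) (snd p) i \<omega>)) \<partial>M)"
    by simp
  also have "\<dots> = (\<Prod>p\<in>Q1 \<union> Q2. \<integral>\<omega>. f p (V (fst p) 1 i \<omega>) \<partial>M)"
  proof (rule integral_prod_V[where B = 1])
    show "finite (Q1 \<union> Q2)" "Q1 \<union> Q2 \<subseteq> {1..m} \<times> {1..}" "i \<in> {1..m}"
      using Q i by auto
    show "f p \<in> borel_measurable borel" for p
      unfolding f_def by measurable
    show "\<bar>f p v\<bar> \<le> 1" if "0 \<le> v" "v \<le> 1" for p v
      using that unfolding f_def by (auto simp: abs_mult intro: mult_le_one)
  qed
  also have "\<dots> = joint_escape_prob i Q1 Q2"
    unfolding joint_escape_def miss_prob_def miss_both_prob_def f_def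
    by (intro prod.cong refl) (auto simp: power2_eq_square)
  finally show ?thesis .
qed

lemma integral_escape_mult:
  assumes i: "i \<in> {1..m}" and j: "j1 \<in> {1..N i}" "j2 \<in> {1..N i}"
    and distinct: "j1 \<noteq> j2 \<or> Q1 \<inter> Q2 = {}"
    and Q: "finite Q1" "finite Q2" "Q1 \<subseteq> {1..m} \<times> {1..}" "Q2 \<subseteq> {1..m} \<times> {1..}"
  shows "(\<integral>\<omega>. escape C i j1 Q1 \<omega> * escape C i j2 Q2 \<omega> \<partial>M) = joint_escape_prob i Q1 Q2"
proof -
  define e1 e2 where "e1 p = (fst p, snd p, i, j1)" and "e2 p = (fst p, snd p, i, j2)" for p :: "nat \<times> nat"
  define P where "P = e1 ` Q1 \<union> e2 ` Q2"
  have P: "finite P" "P \<subseteq> {(k, l, i, j). k \<in> {1..m} \<and> 1 \<le> l \<and> i \<in> {1..m} \<and> j \<in> {1..N i}}"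
    using Q i j unfolding P_def e1_def e2_def by auto
  have no_contact: "{\<omega>. \<forall>(k, l)\<in>Q1. \<not> C k l i j1 \<omega>} \<inter> {\<omega>. \<forall>(k, l)\<in>Q2. \<not> C k l i j2 \<omega>} \<inter> space M
      = space M \<inter> {\<omega> \<in> space M. \<forall>(k, l, i, j)\<in>P. C k l i j \<omega> = False}"
    unfolding P_def e1_def e2_def by (auto simp: ball_Un case_prod_beta)
  have "(\<integral>\<omega>. escape C i j1 Q1 \<omega> * escape C i j2 Q2 \<omega> \<partial>M)
      = measure M (space M \<inter> {\<omega> \<in> space M. \<forall>(k, l, i, j)\<in>P. C k l i j \<omega> = False})"
  proof -
    have "(\<integral>\<omega>. escape C i j1 Q1 \<omega> * escape C i j2 Q2 \<omega> \<partial>M)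
        = measure M ({\<omega>. \<forall>(k, l)\<in>Q1. \<not> C k l i j1 \<omega>} \<inter> {\<omega>. \<forall>(k, l)\<in>Q2. \<not> C k l i j2 \<omega>} \<inter> space M)"
      by (simp add: escape_def indicator_inter_arith[symmetric])
    then show ?thesis
      by (simp only: no_contact)
  qed
  also have "\<dots> = (\<integral>\<omega>. indicator (space M) \<omega>
      * (\<Prod>(k, l, i, j)\<in>P. if False then V k l i \<omega> else 1 - V k l i \<omega>) \<partial>M)"
  proof -
    have "space M \<in> Vsigma M m V"
      unfolding Vsigma_def by (rule sigma_sets_top)
    then show ?thesis
      by (intro C_cond[rule_format, of "space M" P "\<lambda>_. False"] conjI P)
  qed
  also have "\<dots> = (\<integral>\<omega>. (\<Prod>p\<in>Q1. 1 - V (fst p) (snd p) i \<omega>) * (\<Prod>p\<in>Q2. 1 - V (fst p) (snd p) i \<omega>) \<partial>M)"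
  proof (rule Bochner_Integration.integral_cong[OF refl])
    fix \<omega> assume "\<omega> \<in> space M"
    have "inj_on e1 Q1" "inj_on e2 Q2" "e1 ` Q1 \<inter> e2 ` Q2 = {}"
      using distinct unfolding e1_def e2_def by (auto intro!: inj_onI simp: prod_eq_iff)
    then show "indicator (space M) \<omega> * (\<Prod>(k, l, i, j)\<in>P. if False then V k l i \<omega> else 1 - V k l i \<omega>)
        = (\<Prod>p\<in>Q1. 1 - V (fst p) (snd p) i \<omega>) * (\<Prod>p\<in>Q2. 1 - V (fst p) (snd p) i \<omega>)"
      using \<open>\<omega> \<in> space M\<close> Q unfolding P_def
      by (simp add: prod.union_disjoint prod.reindex) (simp add: e1_def e2_def case_prod_beta)
  qed
  also have "\<dots> = joint_escape_prob i Q1 Q2"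
    using Q i by (rule integral_prod_miss)
  finally show ?thesis .
qed

lemma integral_escape:
  assumes "i \<in> {1..m}" "j \<in> {1..N i}" "finite Q" "Q \<subseteq> {1..m} \<times> {1..}"
  shows "expectation (escape C i j Q) = (\<Prod>p\<in>Q. miss_prob (fst p) i)"
  using integral_escape_mult[of i j j Q "{}"] assms by (simp add: escape_def)

lemma cov_escape:
  assumes "i \<in> {1..m}" "j1 \<in> {1..N i}" "j2 \<in> {1..N i}" "j1 \<noteq> j2"
    and "finite Q1" "finite Q2" "Q1 \<subseteq> {1..m} \<times> {1..}" "Q2 \<subseteq> {1..m} \<times> {1..}"
  shows "cov M (escape C i j1 Q1) (escape C i j2 Q2)
    = joint_escape_prob i Q1 Q2 - joint_escape_prob i Q1 {} * joint_escape_prob i Q2 {}"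
  using assms by (simp add: cov_eq integrable_escape integrable_escape_mult integral_escape_mult integral_escape)

lemma cov_chi:
  fixes Nt t u :: "nat \<Rightarrow> real"
  assumes "i \<in> {1..m}" "j1 \<in> {1..N i}" "j2 \<in> {1..N i}" "j1 \<noteq> j2"
  defines "T \<equiv> infectives m Nt t" and "U \<equiv> infectives m Nt u"
  shows "cov M (chi m Nt C i j1 t) (chi m Nt C i j2 u)
    = joint_escape_prob i T U - joint_escape_prob i T {} * joint_escape_prob i U {}"
  using assms infectives_subset
  by (simp add: chi_eq_one_minus_escape cov_one_minus integrable_escape cov_escape)

lemma cov_chi_increments:
  fixes Nt t u :: "nat \<Rightarrow> real"
  assumes "i \<in> {1..m}" "j1 \<in> {1..N i}" "j2 \<in> {1..N i}" "j1 \<noteq> j2"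
  defines "T \<equiv> infectives m Nt t" and "U \<equiv> infectives m Nt u"
  shows "cov M (\<lambda>\<omega>. chi m Nt C i j1 t \<omega> - chi m Nt C i j1 u \<omega>) (\<lambda>\<omega>. chi m Nt C i j2 t \<omega> - chi m Nt C i j2 u \<omega>)
    = joint_escape_prob i U U - 2 * joint_escape_prob i T U + joint_escape_prob i T T
      - (joint_escape_prob i U {} - joint_escape_prob i T {})\<^sup>2"
proof -
  have "cov M (\<lambda>\<omega>. chi m Nt C i j1 t \<omega> - chi m Nt C i j1 u \<omega>) (\<lambda>\<omega>. chi m Nt C i j2 t \<omega> - chi m Nt C i j2 u \<omega>)
      = cov M (\<lambda>\<omega>. escape C i j1 U \<omega> - escape C i j1 T \<omega>) (\<lambda>\<omega>. escape C i j2 U \<omega> - escape C i j2 T \<omega>)"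
    by (simp add: chi_eq_one_minus_escape T_def U_def)
  also have "\<dots> = cov M (escape C i j1 U) (escape C i j2 U) - cov M (escape C i j1 U) (escape C i j2 T)
      - cov M (escape C i j1 T) (escape C i j2 U) + cov M (escape C i j1 T) (escape C i j2 T)"
    by (intro cov_diff_diff) (simp_all add: T_def U_def integrable_escape integrable_escape_mult)
  finally show ?thesis
    using assms infectives_subset joint_escape_commute[of _ _ T U]
    by (simp add: cov_escape power2_eq_square algebra_simps)
qed

lemma unit_moments_miss_prob_infectives:
  assumes "i \<in> {1..m}" "p \<in> infectives m Nt t"
  shows "unit_moments (miss_prob (fst p) i) (miss_both_prob (fst p) i)"
  using assms by (intro unit_moments_miss_prob) (auto simp: infectives_def)

lemma sum_infectives_Int_variance:
  fixes Nt t u :: "nat \<Rightarrow> real"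
  assumes i: "i \<in> {1..m}" and nonneg: "\<forall>k\<in>{1..m}. 0 \<le> t k \<and> 0 \<le> u k \<and> 0 \<le> Nt k"
  defines "S \<equiv> (\<Sum>p\<in>infectives m Nt t \<inter> infectives m Nt u. miss_both_prob (fst p) i - (miss_prob (fst p) i)\<^sup>2)"
  shows "0 \<le> S" and "S \<le> (\<Sum>k\<in>{1..m}. min (t k) (u k) * Nt k * variance (V k 1 i))"
proof -
  have variance_nonneg: "0 \<le> variance (V k 1 i)" for k
    by (rule integral_nonneg_AE) auto
  have S: "S = (\<Sum>p\<in>infectives m Nt t \<inter> infectives m Nt u. variance (V (fst p) 1 i))"
    unfolding S_def using i by (intro sum.cong refl variance_V_eq[symmetric]) (auto simp: infectives_def)
  show "0 \<le> S"
    unfolding S using variance_nonneg by (rule sum_nonneg)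
  show "S \<le> (\<Sum>k\<in>{1..m}. min (t k) (u k) * Nt k * variance (V k 1 i))"
    unfolding S using nonneg variance_nonneg by (intro sum_infectives_Int_le[where g = "\<lambda>k. variance (V k 1 i)"]) auto
qed

lemma cov_chi_bounds:
  fixes Nt t u :: "nat \<Rightarrow> real"
  assumes i: "i \<in> {1..m}" and j: "j1 \<in> {1..N i}" "j2 \<in> {1..N i}" "j1 \<noteq> j2"
    and nonneg: "\<forall>k\<in>{1..m}. 0 \<le> t k \<and> 0 \<le> u k \<and> 0 \<le> Nt k"
  shows "0 \<le> cov M (chi m Nt C i j1 t) (chi m Nt C i j2 u)"
    and "cov M (chi m Nt C i j1 t) (chi m Nt C i j2 u)
      \<le> (\<Sum>k\<in>{1..m}. min (t k) (u k) * Nt k * variance (V k 1 i))"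
proof -
  define T U where "T = infectives m Nt t" and "U = infectives m Nt u"
  have fin: "finite T" "finite U"
    by (simp_all add: T_def U_def)
  have "\<And>p. p \<in> T \<union> U \<Longrightarrow> unit_moments (miss_prob (fst p) i) (miss_both_prob (fst p) i)"
    unfolding T_def U_def using unit_moments_miss_prob_infectives[OF i] by blast
  note bounds = joint_escape_cov_bounds[of T U "\<lambda>p. miss_prob (fst p) i" "\<lambda>p. miss_both_prob (fst p) i",
      OF fin this, unfolded T_def U_def]
  show "0 \<le> cov M (chi m Nt C i j1 t) (chi m Nt C i j2 u)"
    using bounds(1) unfolding cov_chi[OF i j] T_def U_def by simp
  show "cov M (chi m Nt C i j1 t) (chi m Nt C i j2 u)
      \<le> (\<Sum>k\<in>{1..m}. min (t k) (u k) * Nt k * variance (V k 1 i))"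
    using bounds(2) sum_infectives_Int_variance(2)[OF i nonneg]
    unfolding cov_chi[OF i j] by (rule order_trans)
qed

lemma cov_chi_increments_bound:
  fixes Nt t u :: "nat \<Rightarrow> real"
  assumes i: "i \<in> {1..m}" and j: "j1 \<in> {1..N i}" "j2 \<in> {1..N i}" "j1 \<noteq> j2"
    and nonneg: "\<forall>k\<in>{1..m}. 0 \<le> t k \<and> 0 \<le> u k \<and> 0 \<le> Nt k"
  defines "n_between \<equiv> \<lambda>k. real_of_int \<lfloor>max (t k) (u k) * Nt k\<rfloor> - real_of_int \<lfloor>min (t k) (u k) * Nt k\<rfloor>"
  shows "\<bar>cov M (\<lambda>\<omega>. chi m Nt C i j1 t \<omega> - chi m Nt C i j1 u \<omega>)
              (\<lambda>\<omega>. chi m Nt C i j2 t \<omega> - chi m Nt C i j2 u \<omega>)\<bar>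
    \<le> (\<Sum>k\<in>{1..m}. n_between k * expectation (V k 1 i))
        * (\<Sum>k\<in>{1..m}. min (t k) (u k) * Nt k * variance (V k 1 i))
      + (\<Sum>k\<in>{1..m}. n_between k * variance (V k 1 i))"
proof -
  define T U where "T = infectives m Nt t" and "U = infectives m Nt u"
  let ?a = "\<lambda>p. miss_prob (fst p) i" and ?s = "\<lambda>p. miss_both_prob (fst p) i"
  have fin: "finite T" "finite U"
    by (simp_all add: T_def U_def)
  have moments: "\<And>p. p \<in> T \<union> U \<Longrightarrow> unit_moments (?a p) (?s p)"
    unfolding T_def U_def using unit_moments_miss_prob_infectives[OF i] by blast
  note bounds = joint_escape_increment_cov_bounds[of T U ?a ?s, OF fin moments]
  note inter = sum_infectives_Int_variance[OF i nonneg, folded T_def U_def]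
  have sym_diff_sum: "(\<Sum>p\<in>sym_diff T U. g (fst p)) = (\<Sum>k\<in>{1..m}. n_between k * g k)" for g
    unfolding T_def U_def n_between_def using nonneg by (rule sum_infectives_sym_diff)
  have "(\<Sum>p\<in>sym_diff T U. 1 - ?a p) = (\<Sum>k\<in>{1..m}. n_between k * (1 - miss_prob k i))"
    by (rule sym_diff_sum)
  also have "\<dots> = (\<Sum>k\<in>{1..m}. n_between k * expectation (V k 1 i))"
    using i by (intro sum.cong refl arg_cong2[where f = "(*)"] expectation_V_eq[symmetric]) auto
  finally have "(\<Sum>p\<in>sym_diff T U. 1 - ?a p) = (\<Sum>k\<in>{1..m}. n_between k * expectation (V k 1 i))" .
  moreover have "(\<Sum>p\<in>sym_diff T U. ?s p - (?a p)\<^sup>2)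
      = (\<Sum>k\<in>{1..m}. n_between k * (miss_both_prob k i - (miss_prob k i)\<^sup>2))"
    by (rule sym_diff_sum)
  moreover have "\<dots> = (\<Sum>k\<in>{1..m}. n_between k * variance (V k 1 i))"
    using i by (intro sum.cong refl arg_cong2[where f = "(*)"] variance_V_eq[symmetric]) auto
  moreover have "0 \<le> (\<Sum>p\<in>sym_diff T U. 1 - ?a p)"
  proof (rule sum_nonneg)
    fix p assume "p \<in> sym_diff T U"
    then show "0 \<le> 1 - ?a p"
      using moments[of p] by (auto simp: unit_moments_def)
  qed
  ultimately show ?thesis
    unfolding cov_chi_increments[OF i j] T_def[symmetric] U_def[symmetric]
    using bounds inter mult_left_mono[OF inter(2), of "\<Sum>p\<in>sym_diff T U. 1 - ?a p"] by auto
qed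

end

theorem lemma3p1:
  fixes M :: "'a measure"
    and m :: nat
    and N :: "nat \<Rightarrow> nat"
    and \<pi> :: "nat \<Rightarrow> real"
    and V :: "nat \<Rightarrow> nat \<Rightarrow> nat \<Rightarrow> 'a \<Rightarrow> real"
    and C :: "nat \<Rightarrow> nat \<Rightarrow> nat \<Rightarrow> nat \<Rightarrow> 'a \<Rightarrow> bool"
    and i j1 j2 :: nat
    and t u :: "nat \<Rightarrow> real"
  defines "Ntot \<equiv> (\<Sum>i\<in>{1..m}. N i)"
  defines "Nt \<equiv> (\<lambda>k. real Ntot * \<pi> k)"
  defines "mu \<equiv> (\<lambda>k i. (\<integral>\<omega>. V k 1 i \<omega> \<partial>M))"
  defines "lam \<equiv> (\<lambda>k i. (\<integral>\<omega>. (V k 1 i \<omega> - (\<integral>x. V k 1 i x \<partial>M))\<^sup>2 \<partial>M))"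
  assumes M: "prob_space M"
    and m: "m \<ge> 1"
    and N_pos: "\<forall>i\<in>{1..m}. N i \<ge> 1"
    and \<pi>_pos: "\<forall>i\<in>{1..m}. \<pi> i > 0"
    and V_meas: "\<forall>k l i. V k l i \<in> borel_measurable M"
    and V_range: "\<forall>k\<in>{1..m}. \<forall>l\<ge>1. \<forall>i\<in>{1..m}. \<forall>\<omega>\<in>space M. 0 \<le> V k l i \<omega> \<and> V k l i \<omega> \<le> 1"
    and V_indep: "prob_space.indep_vars M (\<lambda>_. PiM {1..m} (\<lambda>_. (borel :: real measure)))
                    (\<lambda>(k, l) \<omega>. restrict (\<lambda>i. V k l i \<omega>) {1..m}) ({1..m} \<times> {1..})"
    and V_ident: "\<forall>k\<in>{1..m}. \<forall>l\<ge>1.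
                    distr M (PiM {1..m} (\<lambda>_. (borel :: real measure))) (\<lambda>\<omega>. restrict (\<lambda>i. V k l i \<omega>) {1..m})
                  = distr M (PiM {1..m} (\<lambda>_. (borel :: real measure))) (\<lambda>\<omega>. restrict (\<lambda>i. V k 1 i \<omega>) {1..m})"
    and C_meas: "\<forall>k l i j. {\<omega> \<in> space M. C k l i j \<omega>} \<in> sets M"
    and C_cond: "\<forall>A\<in>Vsigma M m V. \<forall>P b. finite P \<and>
                   P \<subseteq> {(k, l, i, j). k \<in> {1..m} \<and> 1 \<le> l \<and> i \<in> {1..m} \<and> j \<in> {1..N i}} \<longrightarrow>
                   measure M (A \<inter> {\<omega> \<in> space M. \<forall>(k, l, i, j)\<in>P. C k l i j \<omega> = b (k, l, i, j)})
                 = (\<integral>\<omega>. indicator A \<omega> *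
                      (\<Prod>(k, l, i, j)\<in>P. if b (k, l, i, j) then V k l i \<omega> else 1 - V k l i \<omega>) \<partial>M)"
    and i: "i \<in> {1..m}"
    and j: "1 \<le> j1" "j1 < j2" "j2 \<le> N i"
    and tu: "\<forall>k\<in>{1..m}. t k \<ge> 0 \<and> u k \<ge> 0"
  shows "0 \<le> cov M (chi m Nt C i j1 t) (chi m Nt C i j2 u)
       \<and> cov M (chi m Nt C i j1 t) (chi m Nt C i j2 u)
           \<le> (\<Sum>k\<in>{1..m}. min (t k) (u k) * Nt k * lam k i)
       \<and> \<bar>cov M (\<lambda>\<omega>. chi m Nt C i j1 t \<omega> - chi m Nt C i j1 u \<omega>)
                (\<lambda>\<omega>. chi m Nt C i j2 t \<omega> - chi m Nt C i j2 u \<omega>)\<bar>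
           \<le> 6 * (\<Sum>k\<in>{1..m}. (real_of_int \<lfloor>max (t k) (u k) * Nt k\<rfloor>
                                 - real_of_int \<lfloor>min (t k) (u k) * Nt k\<rfloor>) * mu k i)
               * (\<Sum>k\<in>{1..m}. min (t k) (u k) * Nt k * lam k i)
             + 2 * (\<Sum>k\<in>{1..m}. (real_of_int \<lfloor>max (t k) (u k) * Nt k\<rfloor>
                                 - real_of_int \<lfloor>min (t k) (u k) * Nt k\<rfloor>) * lam k i)"
proof -
  interpret contact_model M m N V C
    using M V_meas V_range V_indep V_ident C_meas C_cond
    by (rule contact_model.intro[OF _ contact_model_axioms.intro])
  have j': "j1 \<in> {1..N i}" "j2 \<in> {1..N i}" "j1 \<noteq> j2"
    using j by auto
  have nonneg: "\<forall>k\<in>{1..m}. 0 \<le> t k \<and> 0 \<le> u k \<and> 0 \<le> Nt k"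
    using tu \<pi>_pos by (auto simp: Nt_def less_imp_le)
  have mu_eq: "mu k i = expectation (V k 1 i)" and lam_eq: "lam k i = variance (V k 1 i)" for k
    by (simp_all add: mu_def lam_def)
  define n_between where "n_between k = real_of_int \<lfloor>max (t k) (u k) * Nt k\<rfloor> - real_of_int \<lfloor>min (t k) (u k) * Nt k\<rfloor>" for k
  define A B D where "A = (\<Sum>k\<in>{1..m}. n_between k * mu k i)"
    and "B = (\<Sum>k\<in>{1..m}. min (t k) (u k) * Nt k * lam k i)" and "D = (\<Sum>k\<in>{1..m}. n_between k * lam k i)"
  note cov = cov_chi_bounds[OF i j' nonneg, folded lam_eq B_def]
  note increments = cov_chi_increments_bound[OF i j' nonneg, folded mu_eq lam_eq n_between_def, folded A_def B_def D_def]
  have "0 \<le> n_between k" "0 \<le> mu k i" "0 \<le> lam k i" if "k \<in> {1..m}" for k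
    using nonneg V_range i that unfolding n_between_def mu_def lam_def
    by (auto intro!: floor_mono mult_right_mono integral_nonneg_AE)
  then have "0 \<le> A" "0 \<le> D"
    unfolding A_def D_def by (auto intro!: sum_nonneg)
  moreover have "0 \<le> B"
    using cov by linarith
  ultimately have "0 \<le> A * B" "0 \<le> D"
    by simp_all
  then have "\<bar>cov M (\<lambda>\<omega>. chi m Nt C i j1 t \<omega> - chi m Nt C i j1 u \<omega>)
                (\<lambda>\<omega>. chi m Nt C i j2 t \<omega> - chi m Nt C i j2 u \<omega>)\<bar> \<le> 6 * A * B + 2 * D"
    using increments by linarith
  then show ?thesis
    using cov unfolding A_def B_def D_def n_between_def by blast
qed

end
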